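(* For any positive integers $t,s$ with $ts=n$, there is an $[nt,s]$-scheme for \textsc{MIS} on $n$-vertex graphs. This is optimal up to logarithmic factors, since any $(h,v)$-scheme for \textsc{MIS} is known to require $hv=\Omega(n^2)$.
   Context: Annotated streaming model (schemes): a space-bounded Verifier reads an input stream $\sigma$ (here the edges of a graph $G$ on vertex set $[n]$); after the stream ends, an all-powerful Prover sends a help message to the Verifier as a stream. For a problem whose output may be large, the Prover streams a purported output as part of the help, and the Verifier either accepts it or rejects ($\bot$). Requirements: perfect completeness (with the honest help the Verifier accepts a correct output with probability 1) and soundness error at most $1/3$ (for every input and every help message, the probability that the Verifier accepts an incorrect output is at most $1/3$). An $(h,v)$-scheme uses $O(h)$ bits of help and $O(v)$ bits of Verifier space; an $[h,v]$-scheme uses $\tilde{O}(h)$ and $\tilde{O}(v)$ bits respectively, where $\tilde{O}$ hides factors polynomial in $\log n$. \textsc{MIS}: given the graph $G$, output an inclusion-wise maximal independent set of vertices of $G$. *)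

theory Defs
  imports "HOL-Probability.Probability"
begin

text \<open>Input streams: lists of edges of a simple undirected graph on vertex set [n] = {0..<n};
  each edge appears once (in either orientation), no loops.\<close>
definition valid_stream :: "nat \<Rightarrow> (nat \<times> nat) list \<Rightarrow> bool" where
  "valid_stream n \<sigma> \<longleftrightarrow>
     (\<forall>(u, w) \<in> set \<sigma>. u < n \<and> w < n \<and> u \<noteq> w) \<and>
     distinct (map (\<lambda>(u, w). {u, w}) \<sigma>)"

definition adj :: "(nat \<times> nat) list \<Rightarrow> nat \<Rightarrow> nat \<Rightarrow> bool" where
  "adj \<sigma> u w \<longleftrightarrow> (u, w) \<in> set \<sigma> \<or> (w, u) \<in> set \<sigma>"

definition is_MIS :: "nat \<Rightarrow> (nat \<times> nat) list \<Rightarrow> nat set \<Rightarrow> bool" where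
  "is_MIS n \<sigma> S \<longleftrightarrow>
     S \<subseteq> {..<n} \<and>
     (\<forall>u \<in> S. \<forall>w \<in> S. \<not> adj \<sigma> u w) \<and>
     (\<forall>x < n. x \<notin> S \<longrightarrow> (\<exists>y \<in> S. adj \<sigma> x y))"

text \<open>A (non-uniform) streaming verifier: its memory state is a number (v bits means states
  below 2^v); random bits are drawn into the initial state; it processes the input stream
  element by element, then the help message bit by bit, and finally accepts or rejects.\<close>
record verifier =
  v_init :: "nat pmf"
  v_in   :: "nat \<Rightarrow> nat \<times> nat \<Rightarrow> nat"
  v_help :: "nat \<Rightarrow> bool \<Rightarrow> nat"
  v_acc  :: "nat \<Rightarrow> bool"
  v_out  :: "bool list \<Rightarrow> nat set"

definition run :: "verifier \<Rightarrow> (nat \<times> nat) list \<Rightarrow> bool list \<Rightarrow> nat \<Rightarrow> nat" where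
  "run V \<sigma> \<eta> r = foldl (v_help V) (foldl (v_in V) r \<sigma>) \<eta>"

definition accept_prob :: "verifier \<Rightarrow> (nat \<times> nat) list \<Rightarrow> bool list \<Rightarrow> real" where
  "accept_prob V \<sigma> \<eta> = measure_pmf.prob (v_init V) {r. v_acc V (run V \<sigma> \<eta> r)}"

text \<open>V is an (h,v)-scheme for MIS on n-vertex graphs (exact bounds h bits of help,
  v bits of space; constants are handled in the theorem).\<close>
definition is_MIS_scheme :: "nat \<Rightarrow> nat \<Rightarrow> nat \<Rightarrow> verifier \<Rightarrow> bool" where
  "is_MIS_scheme n h v V \<longleftrightarrow>
     set_pmf (v_init V) \<subseteq> {..<2 ^ v} \<and>
     (\<forall>r < 2 ^ v. \<forall>e. v_in V r e < 2 ^ v) \<and>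
     (\<forall>r < 2 ^ v. \<forall>b. v_help V r b < 2 ^ v) \<and>
     (\<forall>\<sigma>. valid_stream n \<sigma> \<longrightarrow>
        (\<exists>\<eta>. length \<eta> \<le> h \<and> is_MIS n \<sigma> (v_out V \<eta>) \<and> accept_prob V \<sigma> \<eta> = 1)) \<and>
     (\<forall>\<sigma> \<eta>. valid_stream n \<sigma> \<longrightarrow> \<not> is_MIS n \<sigma> (v_out V \<eta>) \<longrightarrow>
        accept_prob V \<sigma> \<eta> \<le> 1 / 3)"

end

theory Submission
  imports Defs "HOL-Computational_Algebra.Polynomial"
begin

(* Write a vertex w < n = t s as a row w div s < t and a column w mod s < s. For a set S
   and a column j let P_j have a monomial x^(a t + b div s) for every arc (a, b) with b in
   column j, and Q_j a monomial x^(t - 1 - w div s) for every w in S in column j. In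
   R = sum_j P_j Q_j, which has degree below K = n t + t - 1, the coefficient of
   x^(u t + t - 1) is the number of neighbours of u in S, because the exponents of a
   matching pair add up to u t + t - 1 only if the arc goes from u to w.
   The prover sends the K coefficients of R for an MIS S. The verifier takes as S the set of
   vertices u whose coefficient of x^(u t + t - 1) is 0 modulo p; if all coefficients are
   right, u is in S iff it has no neighbour in S, i.e. S is an MIS. The verifier checks
   the coefficients by evaluating both sides at a random point r modulo a prime
   p >= 3 K with O(log n) bits: the s values P_j(r) are accumulated while the edges
   stream by and the s values Q_j(r) while the help is read, in O(s log n) bits of space.
   A wrong claim differs from R by a polynomial of degree below K, which has fewer than
   K <= p / 3 roots modulo p. A prime of that size exists because the central binomial
   coefficient (2m choose m) >= 4^m / 2m has no prime power factor above 2m. *)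

section \<open>Primes in a cubic interval\<close>

lemma multiplicity_fact_prime:
  fixes p :: nat
  assumes p: "prime p"
  shows "multiplicity p (fact n :: nat) = (\<Sum>i\<in>{1..n}. n div p ^ i)"
proof (induction n)
  case 0
  show ?case by simp
next
  case (Suc n)
  have p1: "p > 1"
    using p prime_gt_1_nat by blast
  have "multiplicity p (Suc n) \<le> n"
  proof -
    have "multiplicity p (Suc n) < p ^ multiplicity p (Suc n)"
      using p1 by (simp add: power_gt_expt)
    also have "\<dots> \<le> Suc n"
      by (intro dvd_imp_le multiplicity_dvd) simp
    finally show ?thesis by simp
  qed
  then have "{i\<in>{1..n}. p ^ i dvd Suc n} = {1..multiplicity p (Suc n)}"
    using p1 by (auto simp: power_dvd_iff_le_multiplicity)
  then have mult_Suc: "multiplicity p (Suc n) = card {i\<in>{1..n}. p ^ i dvd Suc n}"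
    by simp
  have "Suc n div p ^ Suc n = 0"
    using p1 by (intro div_less power_gt_expt) simp
  then have "(\<Sum>i\<in>{1..Suc n}. Suc n div p ^ i) = (\<Sum>i\<in>{1..n}. Suc n div p ^ i)"
    by simp
  also have "\<dots> = (\<Sum>i\<in>{1..n}. n div p ^ i + (if p ^ i dvd Suc n then 1 else 0))"
    by (intro sum.cong refl) (simp add: div_Suc dvd_eq_mod_eq_0)
  also have "\<dots> = (\<Sum>i\<in>{1..n}. n div p ^ i) + multiplicity p (Suc n)"
    unfolding mult_Suc by (simp add: sum.distrib sum.If_cases Int_def)
  also have "\<dots> = multiplicity p (Suc n * fact n :: nat)"
    by (subst prime_elem_multiplicity_mult_distrib) (use p Suc.IH in auto)
  finally show ?case
    by (simp only: fact_Suc of_nat_id)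
qed

lemma double_div_le: "2 * m div q \<le> 2 * (m div q) + (1 :: nat)"
proof (cases "q = 0")
  case False
  have "2 * m = q * (2 * (m div q)) + 2 * (m mod q)"
    by (metis distrib_left mult_2 mult_div_mod_eq)
  then have "2 * m div q = 2 * (m div q) + 2 * (m mod q) div q"
    using False by simp
  moreover have "2 * (m mod q) div q < 2"
    using False by (simp add: div_less_iff_less_mult)
  ultimately show ?thesis
    by linarith
qed simp

lemma sum_div_power_central_binomial:
  fixes p m :: nat
  assumes p: "prime p"
  shows "(\<Sum>i\<in>{1..2 * m}. 2 * m div p ^ i)
    = (\<Sum>i\<in>{1..2 * m}. 2 * (m div p ^ i)) + multiplicity p (2 * m choose m)"
proof -
  have p1: "p > 1"
    using p prime_gt_1_nat by blast
  have "fact (2 * m) = fact m * fact m * (2 * m choose m :: nat)"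
    using binomial_fact_lemma[of m "2 * m"] by (simp add: mult_2)
  then have "multiplicity p (fact (2 * m) :: nat)
      = 2 * multiplicity p (fact m :: nat) + multiplicity p (2 * m choose m)"
    using p by (simp add: prime_elem_multiplicity_mult_distrib)
  moreover have "(\<Sum>i\<in>{1..2 * m}. m div p ^ i) = (\<Sum>i\<in>{1..m}. m div p ^ i)"
  proof (rule sum.mono_neutral_right)
    show "\<forall>i\<in>{1..2 * m} - {1..m}. m div p ^ i = 0"
      using p1 power_gt_expt[of p m] power_increasing[of m _ p]
      by (auto intro!: div_less order.strict_trans2[of m "p ^ m"])
  qed auto
  ultimately show ?thesis
    by (simp add: multiplicity_fact_prime[OF p] sum_distrib_left[symmetric])
qed

lemma prime_power_multiplicity_central_binomial_le:
  fixes p m :: nat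
  assumes p: "prime p" and m: "m > 0"
  shows "p ^ multiplicity p (2 * m choose m) \<le> 2 * m"
proof (rule ccontr)
  define e where "e = multiplicity p (2 * m choose m)"
  assume "\<not> p ^ multiplicity p (2 * m choose m) \<le> 2 * m"
  then have pe: "2 * m < p ^ e"
    unfolding e_def by simp
  (* each summand 2m div p^i - 2 (m div p^i) is at most 1, and it vanishes for i \<ge> e *)
  have "(\<Sum>i\<in>{1..2 * m}. 2 * m div p ^ i) \<le> (\<Sum>i\<in>{1..2 * m}. 2 * (m div p ^ i) + (if i < e then 1 else 0))"
  proof (rule sum_mono)
    fix i
    have "2 * m div p ^ i = 0" if "e \<le> i"
    proof -
      have "p ^ e \<le> p ^ i"
        using that p prime_gt_1_nat[of p] by (intro power_increasing) auto
      with pe show ?thesis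
        by simp
    qed
    then show "2 * m div p ^ i \<le> 2 * (m div p ^ i) + (if i < e then 1 else 0)"
      using double_div_le[of m "p ^ i"] by auto
  qed
  also have "\<dots> = (\<Sum>i\<in>{1..2 * m}. 2 * (m div p ^ i)) + card ({1..2 * m} \<inter> {..<e})"
    by (simp add: sum.distrib sum.If_cases Int_def)
  finally have "e \<le> card ({1..2 * m} \<inter> {..<e})"
    using sum_div_power_central_binomial[OF p, of m] by (simp add: e_def)
  also have "\<dots> \<le> card {1..<e}"
    by (intro card_mono) auto
  finally show False
    using pe m by (cases e) auto
qed

lemma cube_power_bound:
  fixes N :: nat
  assumes N: "N \<ge> 4"
  shows "(2 * N ^ 3) ^ (N + 1) < 4 ^ (N ^ 3)"
proof -
  have "(3 * N + 1) * (N + 1) = 3 * (N * N) + 4 * N + 1"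
    by (simp add: algebra_simps)
  moreover have "2 * N ^ 3 = 2 * N * (N * N)"
    by (simp add: power3_eq_cube algebra_simps)
  moreover have "20 * N \<le> 5 * (N * N)" "8 * (N * N) \<le> 2 * N * (N * N)"
    using N by simp_all
  ultimately have exponents: "(3 * N + 1) * (N + 1) < 2 * N ^ 3"
    using N by linarith
  have "N ^ 3 < (2 ^ N) ^ 3"
    using less_exp[of N] by (intro power_strict_mono) auto
  then have "2 * N ^ 3 < 2 ^ (3 * N + 1)"
    by (simp add: power_mult[symmetric] mult.commute)
  then have "(2 * N ^ 3) ^ (N + 1) < (2 ^ (3 * N + 1)) ^ (N + 1)"
    by (intro power_strict_mono) auto
  also have "\<dots> = 2 ^ ((3 * N + 1) * (N + 1))"
    by (rule power_mult[symmetric])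
  also have "\<dots> < 2 ^ (2 * N ^ 3)"
    using exponents by (intro power_strict_increasing) auto
  also have "\<dots> = 4 ^ (N ^ 3)"
    by (simp add: power_mult)
  finally show ?thesis .
qed

lemma central_binomial_le_if_prime_factors_le:
  fixes m N :: nat
  assumes m: "m > 0" and small: "\<And>q. prime q \<Longrightarrow> q dvd (2 * m choose m) \<Longrightarrow> q \<le> N"
  shows "(2 * m choose m) \<le> (2 * m) ^ N"
proof -
  define C where "C = (2 * m choose m)"
  have "prime_factors C \<subseteq> {1..N}"
    using small by (auto simp: C_def Suc_le_eq prime_gt_0_nat in_prime_factors_iff)
  then have card_factors: "card (prime_factors C) \<le> N"
    using card_mono[of "{1..N}" "prime_factors C"] by simp
  have "C = (\<Prod>q\<in>prime_factors C. q ^ multiplicity q C)"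
    using prime_factorization_nat[of C] by (simp add: C_def)
  also have "\<dots> \<le> (\<Prod>q\<in>prime_factors C. 2 * m)"
    by (intro prod_mono) (auto simp: C_def intro!: prime_power_multiplicity_central_binomial_le m)
  also have "\<dots> = (2 * m) ^ card (prime_factors C)"
    by simp
  also have "\<dots> \<le> (2 * m) ^ N"
    using card_factors m by (intro power_increasing) auto
  finally show ?thesis
    by (simp add: C_def)
qed

lemma exists_prime_between_cube:
  fixes N :: nat
  assumes N: "N \<ge> 4"
  shows "\<exists>p. prime p \<and> N < p \<and> p \<le> 2 * N ^ 3"
proof (rule ccontr)
  assume no_prime: "\<not> ?thesis"
  define m where "m = N ^ 3"
  have m: "m > 0"
    using N by (simp add: m_def)
  have "q \<le> N" if "prime q" "q dvd (2 * m choose m)" for q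
  proof -
    have "(2 * m choose m) dvd fact (2 * m)"
      by (metis binomial_fact_lemma dvd_triv_right le_add2 mult_2)
    with that(2) have "q dvd fact (2 * m)"
      by (rule dvd_trans)
    with that(1) have "q \<le> 2 * m"
      by (simp add: prime_dvd_fact_iff)
    with that(1) no_prime show ?thesis
      unfolding m_def by (auto simp: not_less)
  qed
  then have "(2 * m choose m) * (2 * m) \<le> (2 * m) ^ N * (2 * m)"
    using central_binomial_le_if_prime_factors_le[OF m] by (intro mult_le_mono1) blast
  moreover have "4 ^ m \<le> (2 * m choose m) * (2 * m)"
  proof -
    have "real (4 ^ m) \<le> real ((2 * m choose m) * (2 * m))"
      using central_binomial_lower_bound[OF m] m by (simp add: divide_le_eq)
    then show ?thesis
      by (simp only: of_nat_le_iff)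
  qed
  ultimately have "4 ^ m \<le> (2 * m) ^ N * (2 * m)"
    by (rule order.trans[rotated])
  then have "4 ^ m \<le> (2 * m) ^ (N + 1)"
    by (simp add: mult.commute)
  then show False
    using cube_power_bound[OF N] unfolding m_def by linarith
qed

section \<open>Roots of polynomials modulo a prime\<close>

definition roots_mod :: "nat \<Rightarrow> int poly \<Rightarrow> nat set" where
  "roots_mod p D = {r\<in>{..<p}. int p dvd poly D (int r)}"

lemma not_const_dvd_synthetic_div:
  fixes D :: "'a::idom poly"
  assumes "\<not> [:c:] dvd D" and "c dvd poly D a"
  shows "\<not> [:c:] dvd synthetic_div D a"
proof
  assume "[:c:] dvd synthetic_div D a"
  with assms(2) have "[:c:] dvd [:- a, 1:] * synthetic_div D a + [:poly D a:]"
    by (intro dvd_add dvd_mult) simp_all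
  then have "[:c:] dvd D"
    by (simp only: synthetic_div_correct')
  with assms(1) show False ..
qed

lemma roots_mod_subset_synthetic_div:
  assumes p: "prime p" and a: "a < p" "int p dvd poly D (int a)"
  shows "roots_mod p D \<subseteq> insert a (roots_mod p (synthetic_div D (int a)))"
proof
  fix r
  assume "r \<in> roots_mod p D"
  then have r: "r < p" "int p dvd poly D (int r)"
    by (auto simp: roots_mod_def)
  have "poly D (int r) = (int r - int a) * poly (synthetic_div D (int a)) (int r) + poly D (int a)"
    by (subst synthetic_div_correct'[symmetric, of D "int a"]) (simp add: algebra_simps)
  with r a p have "int p dvd (int r - int a) \<or> int p dvd poly (synthetic_div D (int a)) (int r)"
    by (simp add: dvd_add_left_iff prime_dvd_mult_iff)
  moreover have "r = a" if "int p dvd (int r - int a)"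
  proof (rule ccontr)
    assume "r \<noteq> a"
    from dvd_imp_le_int[OF _ that] this r(1) a(1) show False
      by linarith
  qed
  ultimately show "r \<in> insert a (roots_mod p (synthetic_div D (int a)))"
    using r(1) by (auto simp: roots_mod_def)
qed

lemma card_roots_mod_le_degree:
  fixes D :: "int poly"
  assumes p: "prime p" and D: "\<not> [:int p:] dvd D"
  shows "card (roots_mod p D) \<le> degree D"
  using D
proof (induction "degree D" arbitrary: D rule: less_induct)
  case less
  show ?case
  proof (cases "roots_mod p D = {}")
    case False
    then obtain a where a: "a < p" "int p dvd poly D (int a)"
      by (auto simp: roots_mod_def)
    let ?g = "synthetic_div D (int a)"
    have "degree D \<noteq> 0"
    proof
      assume "degree D = 0"
      then obtain c where "D = [:c:]"
        by (rule degree_eq_zeroE)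
      with a less.prems show False
        by simp
    qed
    then have "card (roots_mod p ?g) \<le> degree D - 1"
      using less.hyps[of ?g] not_const_dvd_synthetic_div[OF less.prems a(2)]
      by (simp add: degree_synthetic_div)
    moreover have "card (roots_mod p D) \<le> card (insert a (roots_mod p ?g))"
      using roots_mod_subset_synthetic_div[OF p a] by (intro card_mono) (auto simp: roots_mod_def)
    moreover have "card (insert a (roots_mod p ?g)) \<le> Suc (card (roots_mod p ?g))"
      by (simp add: card_insert_if roots_mod_def)
    ultimately show ?thesis
      using \<open>degree D \<noteq> 0\<close> by linarith
  qed simp
qed

lemma poly_map_poly_int: "poly (map_poly int P) (int r) = int (poly P r)"
  by (induction P) (simp_all add: map_poly_pCons)

lemma nat_mod_eq_iff_int_dvd_diff: "(a :: nat) mod p = b mod p \<longleftrightarrow> int p dvd int a - int b"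
  by (simp only: mod_eq_dvd_iff[symmetric] zmod_int[symmetric] of_nat_eq_iff)

lemma mod_eq_iff_dvd_poly_diff:
  "poly P r mod p = poly Q r mod p \<longleftrightarrow> int p dvd poly (map_poly int P - map_poly int Q) (int r)"
  by (simp add: poly_map_poly_int nat_mod_eq_iff_int_dvd_diff)

lemma const_dvd_map_poly_diff_iff:
  "[:int p:] dvd map_poly int P - map_poly int Q \<longleftrightarrow> (\<forall>k. coeff P k mod p = coeff Q k mod p)"
  by (simp add: const_poly_dvd_iff coeff_map_poly nat_mod_eq_iff_int_dvd_diff)

lemma poly_mod_eq_if_coeff_mod_eq:
  fixes P Q :: "nat poly"
  assumes "\<forall>k. coeff P k mod p = coeff Q k mod p"
  shows "poly P r mod p = poly Q r mod p"
proof -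
  obtain E where "map_poly int P - map_poly int Q = [:int p:] * E"
    using assms const_dvd_map_poly_diff_iff by blast
  then show ?thesis
    unfolding mod_eq_iff_dvd_poly_diff by simp
qed

lemma card_poly_mod_eq_le_degree:
  fixes P Q :: "nat poly"
  assumes p: "prime p" and "\<exists>k. coeff P k mod p \<noteq> coeff Q k mod p"
  shows "card {r\<in>{..<p}. poly P r mod p = poly Q r mod p} \<le> max (degree P) (degree Q)"
proof -
  let ?D = "map_poly int P - map_poly int Q"
  have "card {r\<in>{..<p}. poly P r mod p = poly Q r mod p} = card (roots_mod p ?D)"
    by (simp only: mod_eq_iff_dvd_poly_diff roots_mod_def)
  also have "\<dots> \<le> degree ?D"
    using assms by (intro card_roots_mod_le_degree) (auto simp: const_dvd_map_poly_diff_iff)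
  also have "\<dots> \<le> max (degree P) (degree Q)"
    using degree_diff_le_max[of "map_poly int P" "map_poly int Q"]
      map_poly_degree_leq[of int P] map_poly_degree_leq[of int Q] by linarith
  finally show ?thesis .
qed

section \<open>Streaming machines over structured states\<close>

record 's machine =
  m_init :: "'s pmf"
  m_in :: "'s \<Rightarrow> nat \<times> nat \<Rightarrow> 's"
  m_help :: "'s \<Rightarrow> bool \<Rightarrow> 's"
  m_acc :: "'s \<Rightarrow> bool"
  m_out :: "bool list \<Rightarrow> nat set"

definition machine_run :: "'s machine \<Rightarrow> (nat \<times> nat) list \<Rightarrow> bool list \<Rightarrow> 's \<Rightarrow> 's" where
  "machine_run M \<sigma> \<eta> x = foldl (m_help M) (foldl (m_in M) x \<sigma>) \<eta>"

definition machine_accept_prob :: "'s machine \<Rightarrow> (nat \<times> nat) list \<Rightarrow> bool list \<Rightarrow> real" where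
  "machine_accept_prob M \<sigma> \<eta> = measure_pmf.prob (m_init M) {x. m_acc M (machine_run M \<sigma> \<eta> x)}"

(* reducing mod 2^v keeps every state in range; on reachable states it has no effect *)
definition encode_machine :: "nat \<Rightarrow> ('s \<Rightarrow> nat) \<Rightarrow> (nat \<Rightarrow> 's) \<Rightarrow> 's machine \<Rightarrow> verifier" where
  "encode_machine v enc dec M =
    \<lparr>v_init = map_pmf (\<lambda>x. enc x mod 2 ^ v) (m_init M),
     v_in = (\<lambda>r e. enc (m_in M (dec r) e) mod 2 ^ v),
     v_help = (\<lambda>r b. enc (m_help M (dec r) b) mod 2 ^ v),
     v_acc = (\<lambda>r. m_acc M (dec r)),
     v_out = m_out M\<rparr>"

locale machine_coding =
  fixes v :: nat and enc :: "'s \<Rightarrow> nat" and dec :: "nat \<Rightarrow> 's"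
    and good :: "'s \<Rightarrow> bool" and M :: "'s machine"
  assumes enc_less: "good x \<Longrightarrow> enc x < 2 ^ v"
    and dec_enc: "good x \<Longrightarrow> dec (enc x) = x"
    and good_init: "x \<in> set_pmf (m_init M) \<Longrightarrow> good x"
    and good_in: "good x \<Longrightarrow> good (m_in M x e)"
    and good_help: "good x \<Longrightarrow> good (m_help M x b)"
begin

lemma foldl_encode:
  assumes "\<And>x a. good x \<Longrightarrow> good (f x a)" and "good x"
  shows "foldl (\<lambda>r a. enc (f (dec r) a) mod 2 ^ v) (enc x) as = enc (foldl f x as)
    \<and> good (foldl f x as)"
  using assms(2)
proof (induction as arbitrary: x)
  case (Cons a as)
  then show ?case
    using assms(1) by (simp add: dec_enc enc_less)
qed simp

lemma run_encode_machine:
  assumes "good x"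
  shows "run (encode_machine v enc dec M) \<sigma> \<eta> (enc x) = enc (machine_run M \<sigma> \<eta> x)"
    and "good (machine_run M \<sigma> \<eta> x)"
  using foldl_encode[of "m_in M" x \<sigma>] foldl_encode[of "m_help M" "foldl (m_in M) x \<sigma>" \<eta>]
    assms good_in good_help
  by (simp_all add: run_def machine_run_def encode_machine_def)

lemma accept_prob_encode_machine:
  "accept_prob (encode_machine v enc dec M) \<sigma> \<eta> = machine_accept_prob M \<sigma> \<eta>"
proof -
  let ?V = "encode_machine v enc dec M"
  let ?A = "{x. v_acc ?V (run ?V \<sigma> \<eta> (enc x mod 2 ^ v))}"
  have "v_acc ?V (run ?V \<sigma> \<eta> (enc x mod 2 ^ v)) \<longleftrightarrow> m_acc M (machine_run M \<sigma> \<eta> x)"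
    if "x \<in> set_pmf (m_init M)" for x
  proof -
    have "good x"
      using that by (rule good_init)
    then have "enc x mod 2 ^ v = enc x"
      using enc_less by simp
    then show ?thesis
      using run_encode_machine[OF \<open>good x\<close>] dec_enc by (simp add: encode_machine_def)
  qed
  then have "?A \<inter> set_pmf (m_init M) = {x. m_acc M (machine_run M \<sigma> \<eta> x)} \<inter> set_pmf (m_init M)"
    by blast
  moreover have "accept_prob ?V \<sigma> \<eta> = measure_pmf.prob (m_init M) ?A"
    unfolding accept_prob_def by (simp add: vimage_def encode_machine_def)
  ultimately show ?thesis
    unfolding machine_accept_prob_def by (metis measure_Int_set_pmf)
qed

lemma is_MIS_scheme_encode_machine:
  assumes complete: "\<And>\<sigma>. valid_stream n \<sigma> \<Longrightarrow>
      \<exists>\<eta>. length \<eta> \<le> h \<and> is_MIS n \<sigma> (m_out M \<eta>) \<and> machine_accept_prob M \<sigma> \<eta> = 1"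
    and sound: "\<And>\<sigma> \<eta>. valid_stream n \<sigma> \<Longrightarrow> \<not> is_MIS n \<sigma> (m_out M \<eta>) \<Longrightarrow>
      machine_accept_prob M \<sigma> \<eta> \<le> 1 / 3"
  shows "is_MIS_scheme n h v (encode_machine v enc dec M)"
  using complete sound unfolding is_MIS_scheme_def accept_prob_encode_machine
  by (auto simp: encode_machine_def)

end

section \<open>Reading the help message in blocks of bits\<close>

definition bits_value :: "bool list \<Rightarrow> nat" where
  "bits_value bs = horner_sum of_bool 2 (rev bs)"

lemma bits_value_snoc [simp]: "bits_value (bs @ [b]) = 2 * bits_value bs + of_bool b"
  by (simp add: bits_value_def)

lemma bits_value_Nil [simp]: "bits_value [] = 0"
  by (simp add: bits_value_def)

lemma bits_value_less: "bits_value bs < 2 ^ length bs"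
  using horner_sum_bound[of "rev bs"] by (simp add: bits_value_def)

lemma bits_value_binary: "bits_value (rev (map (bit c) [0..<L])) = c mod 2 ^ L"
  by (simp add: bits_value_def horner_sum_bit_eq_take_bit take_bit_eq_mod)

definition block :: "nat \<Rightarrow> bool list \<Rightarrow> nat \<Rightarrow> nat" where
  "block L \<eta> k = bits_value (take L (drop (k * L) \<eta>))"

lemma length_concat_blocks:
  assumes "\<And>k. k < m \<Longrightarrow> length (bs k) = L"
  shows "length (concat (map bs [0..<m])) = m * L"
  using assms by (induction m) simp_all

lemma block_concat:
  assumes len: "\<And>k. k < m \<Longrightarrow> length (bs k) = L" and k: "k < m"
  shows "block L (concat (map bs [0..<m])) k = bits_value (bs k)"
proof -
  have "[0..<m] = [0..<k] @ [k..<m]"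
    using upt_add_eq_append[of 0 k "m - k"] k by simp
  also have "[k..<m] = k # [Suc k..<m]"
    using k by (rule upt_conv_Cons)
  finally have "[0..<m] = [0..<k] @ k # [Suc k..<m]" .
  then have "concat (map bs [0..<m]) = concat (map bs [0..<k]) @ bs k @ concat (map bs [Suc k..<m])"
    by simp
  moreover have "length (concat (map bs [0..<k])) = k * L"
    using len k by (intro length_concat_blocks) simp
  ultimately show ?thesis
    using len[OF k] by (simp add: block_def)
qed

(* the state is (bits read, value of the current incomplete block, state of f);
   blocks are read most significant bit first, and bits after m blocks are ignored *)
definition read_bit :: "nat \<Rightarrow> nat \<Rightarrow> (nat \<Rightarrow> nat \<Rightarrow> 's \<Rightarrow> 's) \<Rightarrow> nat \<times> nat \<times> 's \<Rightarrow> bool \<Rightarrow> nat \<times> nat \<times> 's" where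
  "read_bit L m f st b = (case st of (i, c, x) \<Rightarrow>
     if m * L \<le> i then (i, c, x)
     else if Suc (i mod L) = L then (Suc i, 0, f (i div L) (2 * c + of_bool b) x)
     else (Suc i, (2 * c + of_bool b) mod 2 ^ L, x))"

definition fold_blocks :: "nat \<Rightarrow> (nat \<Rightarrow> nat \<Rightarrow> 's \<Rightarrow> 's) \<Rightarrow> 's \<Rightarrow> bool list \<Rightarrow> nat \<Rightarrow> 's" where
  "fold_blocks L f x \<eta> j = foldl (\<lambda>y k. f k (block L \<eta> k) y) x [0..<j]"

lemma fold_blocks_Suc: "fold_blocks L f x \<eta> (Suc j) = f j (block L \<eta> j) (fold_blocks L f x \<eta> j)"
  by (simp add: fold_blocks_def)

lemma fold_blocks_append:
  assumes "j * L \<le> length \<eta>"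
  shows "fold_blocks L f x (\<eta> @ \<zeta>) j = fold_blocks L f x \<eta> j"
  unfolding fold_blocks_def
proof (rule foldl_cong)
  fix y k
  assume "k \<in> set [0..<j]"
  then have "Suc k * L \<le> j * L"
    by (intro mult_le_mono1) simp
  with assms show "f k (block L (\<eta> @ \<zeta>) k) y = f k (block L \<eta> k) y"
    by (simp add: block_def)
qed simp_all

definition reader_state :: "nat \<Rightarrow> (nat \<Rightarrow> nat \<Rightarrow> 's \<Rightarrow> 's) \<Rightarrow> 's \<Rightarrow> bool list \<Rightarrow> nat \<times> nat \<times> 's" where
  "reader_state L f x \<eta> =
    (length \<eta>, bits_value (drop (length \<eta> div L * L) \<eta>), fold_blocks L f x \<eta> (length \<eta> div L))"

lemma read_bit_snoc_block_end:
  assumes L: "0 < L" and len: "length \<eta> < m * L" and last: "Suc (length \<eta> mod L) = L"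
  shows "read_bit L m f (reader_state L f x \<eta>) b = reader_state L f x (\<eta> @ [b])"
proof -
  let ?i = "length \<eta>"
  let ?c = "bits_value (drop (?i div L * L) \<eta>)"
  have "Suc ?i = ?i div L * L + L"
    using last div_mult_mod_eq[of ?i L] by linarith
  then have end_of_block: "Suc ?i = Suc (?i div L) * L"
    by simp
  then have Suc_div: "Suc ?i div L = Suc (?i div L)"
    using L by simp
  have "length (drop (?i div L * L) \<eta>) = L - 1"
    using last by (simp add: minus_div_mult_eq_mod)
  then have "block L (\<eta> @ [b]) (?i div L) = 2 * ?c + of_bool b"
    using L by (simp add: block_def)
  moreover have "fold_blocks L f x (\<eta> @ [b]) (?i div L) = fold_blocks L f x \<eta> (?i div L)"
    by (rule fold_blocks_append) (rule div_times_less_eq_dividend)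
  moreover have "drop (Suc (?i div L) * L) (\<eta> @ [b]) = []"
    using end_of_block by simp
  ultimately have "reader_state L f x (\<eta> @ [b]) = (Suc ?i, 0, f (?i div L) (2 * ?c + of_bool b) (fold_blocks L f x \<eta> (?i div L)))"
    using Suc_div by (simp add: reader_state_def fold_blocks_Suc)
  moreover have "read_bit L m f (reader_state L f x \<eta>) b = (Suc ?i, 0, f (?i div L) (2 * ?c + of_bool b) (fold_blocks L f x \<eta> (?i div L)))"
    using len last by (simp add: read_bit_def reader_state_def)
  ultimately show ?thesis
    by simp
qed

lemma read_bit_snoc_inside_block:
  assumes L: "0 < L" and len: "length \<eta> < m * L" and not_last: "Suc (length \<eta> mod L) \<noteq> L"
  shows "read_bit L m f (reader_state L f x \<eta>) b = reader_state L f x (\<eta> @ [b])"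
proof -
  let ?i = "length \<eta>"
  let ?rest = "drop (?i div L * L) \<eta>"
  have Suc_div: "Suc ?i div L = ?i div L"
    using not_last by (simp add: div_Suc mod_Suc)
  have "2 * bits_value ?rest + of_bool b = bits_value (?rest @ [b])"
    by simp
  also have "\<dots> < 2 ^ Suc (?i mod L)"
    using bits_value_less[of "?rest @ [b]"] by (simp add: minus_div_mult_eq_mod)
  also have "\<dots> \<le> 2 ^ L"
    using not_last mod_less_divisor[OF L, of ?i] by (intro power_increasing) auto
  finally have "read_bit L m f (reader_state L f x \<eta>) b
      = (Suc ?i, bits_value (?rest @ [b]), fold_blocks L f x \<eta> (?i div L))"
    using len not_last by (simp add: read_bit_def reader_state_def)
  moreover have "fold_blocks L f x (\<eta> @ [b]) (?i div L) = fold_blocks L f x \<eta> (?i div L)"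
    by (rule fold_blocks_append) (rule div_times_less_eq_dividend)
  ultimately show ?thesis
    using Suc_div by (simp add: reader_state_def)
qed

lemma foldl_read_bit:
  assumes L: "0 < L" and len: "length \<eta> \<le> m * L"
  shows "foldl (read_bit L m f) (0, 0, x) \<eta> = reader_state L f x \<eta>"
  using len
proof (induction \<eta> rule: rev_induct)
  case Nil
  show ?case
    by (simp add: reader_state_def fold_blocks_def)
next
  case (snoc b \<eta>)
  then have "length \<eta> < m * L"
    by simp
  then show ?case
    using snoc read_bit_snoc_block_end[OF L] read_bit_snoc_inside_block[OF L]
    by (cases "Suc (length \<eta> mod L) = L") simp_all
qed

lemma foldl_read_bit_saturated:
  "m * L \<le> i \<Longrightarrow> foldl (read_bit L m f) (i, c, x) \<eta> = (i, c, x)"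
  by (induction \<eta>) (simp_all add: read_bit_def)

lemma read_bits_complete:
  assumes L: "0 < L" and len: "m * L \<le> length \<eta>"
  shows "foldl (read_bit L m f) (0, 0, x) \<eta> = (m * L, 0, fold_blocks L f x \<eta> m)"
proof -
  have "fold_blocks L f x (take (m * L) \<eta> @ drop (m * L) \<eta>) m = fold_blocks L f x (take (m * L) \<eta>) m"
    using len by (intro fold_blocks_append) simp
  then have "foldl (read_bit L m f) (0, 0, x) (take (m * L) \<eta>) = (m * L, 0, fold_blocks L f x \<eta> m)"
    using foldl_read_bit[OF L, of "take (m * L) \<eta>" m f x] len L by (simp add: reader_state_def)
  then show ?thesis
    using foldl_append[of "read_bit L m f" "(0, 0, x)" "take (m * L) \<eta>" "drop (m * L) \<eta>"]
      foldl_read_bit_saturated[of m L "m * L"] by simp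
qed

lemma read_bits_incomplete:
  assumes "0 < L" and "length \<eta> < m * L"
  shows "fst (foldl (read_bit L m f) (0, 0, x) \<eta>) = length \<eta>"
  using foldl_read_bit[of L \<eta> m f x] assms by (simp add: reader_state_def)

section \<open>Graphs given by edge streams\<close>

definition arcs :: "(nat \<times> nat) list \<Rightarrow> (nat \<times> nat) set" where
  "arcs \<sigma> = {(u, w). adj \<sigma> u w}"

lemma arcs_subset: "valid_stream n \<sigma> \<Longrightarrow> arcs \<sigma> \<subseteq> {..<n} \<times> {..<n}"
  by (auto simp: arcs_def adj_def valid_stream_def)

lemma finite_arcs: "valid_stream n \<sigma> \<Longrightarrow> finite (arcs \<sigma>)"
  using arcs_subset finite_subset by blast

lemma sum_list_stream_both_directions:
  assumes "valid_stream n \<sigma>"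
  shows "(\<Sum>e\<leftarrow>\<sigma>. h e + h (prod.swap e)) = (\<Sum>x\<in>arcs \<sigma>. h x)"
proof -
  have distinct: "distinct (map (\<lambda>(u, w). {u, w}) \<sigma>)" and loopless: "\<And>u w. (u, w) \<in> set \<sigma> \<Longrightarrow> u \<noteq> w"
    using assms by (auto simp: valid_stream_def)
  have disjoint: "set \<sigma> \<inter> prod.swap ` set \<sigma> = {}"
  proof (rule ccontr)
    assume "set \<sigma> \<inter> prod.swap ` set \<sigma> \<noteq> {}"
    then obtain u w where uw: "(u, w) \<in> set \<sigma>" "(w, u) \<in> set \<sigma>"
      by auto
    have "inj_on (\<lambda>(u, w). {u, w}) (set \<sigma>)"
      using distinct by (simp add: distinct_map)
    moreover have "(\<lambda>(u, w). {u, w}) (u, w) = (\<lambda>(u, w). {u, w}) (w, u)"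
      by (simp add: insert_commute)
    ultimately have "(u, w) = (w, u)"
      using uw by (meson inj_onD)
    with loopless[OF uw(1)] show False
      by simp
  qed
  have "(\<Sum>e\<leftarrow>\<sigma>. h e + h (prod.swap e)) = (\<Sum>e\<in>set \<sigma>. h e) + (\<Sum>e\<in>set \<sigma>. h (prod.swap e))"
    using distinct by (simp add: distinct_map sum_list_distinct_conv_sum_set sum.distrib)
  also have "(\<Sum>e\<in>set \<sigma>. h (prod.swap e)) = (\<Sum>e\<in>prod.swap ` set \<sigma>. h e)"
    by (simp add: sum.reindex)
  also have "(\<Sum>e\<in>set \<sigma>. h e) + (\<Sum>e\<in>prod.swap ` set \<sigma>. h e) = (\<Sum>e\<in>set \<sigma> \<union> prod.swap ` set \<sigma>. h e)"
    using disjoint by (simp add: sum.union_disjoint)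
  also have "set \<sigma> \<union> prod.swap ` set \<sigma> = arcs \<sigma>"
    by (auto simp: arcs_def adj_def)
  finally show ?thesis .
qed

lemma is_MIS_iff: "is_MIS n \<sigma> S \<longleftrightarrow> S = {u. u < n \<and> \<not> (\<exists>w\<in>S. adj \<sigma> u w)}"
  unfolding is_MIS_def by blast

lemma exists_MIS:
  assumes "valid_stream n \<sigma>"
  shows "\<exists>S. is_MIS n \<sigma> S"
proof -
  define F where "F = {S. S \<subseteq> {..<n} \<and> (\<forall>u\<in>S. \<forall>w\<in>S. \<not> adj \<sigma> u w)}"
  have "finite F"
    unfolding F_def by (rule finite_subset[of _ "Pow {..<n}"]) auto
  moreover have "F \<noteq> {}"
    by (auto simp: F_def)
  ultimately obtain S where S: "S \<in> F" and maximal: "\<forall>S'\<in>F. S \<subseteq> S' \<longrightarrow> S = S'"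
    using finite_has_maximal by blast
  have loopless: "\<not> adj \<sigma> x x" for x
    using assms by (auto simp: valid_stream_def adj_def)
  have "is_MIS n \<sigma> S"
    unfolding is_MIS_def
  proof (intro conjI allI impI)
    show "S \<subseteq> {..<n}" "\<forall>u\<in>S. \<forall>w\<in>S. \<not> adj \<sigma> u w"
      using S by (simp_all add: F_def)
    fix x
    assume x: "x < n" "x \<notin> S"
    show "\<exists>y\<in>S. adj \<sigma> x y"
    proof (rule ccontr)
      assume "\<not> (\<exists>y\<in>S. adj \<sigma> x y)"
      then have "insert x S \<in> F"
        using S x(1) loopless by (auto simp: F_def adj_def)
      with maximal x(2) show False
        by blast
    qed
  qed
  then show ?thesis ..
qed

section \<open>The neighbour-counting polynomial\<close>

lemma last_of_row_div_mod:
  fixes t u :: nat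
  assumes t: "0 < t"
  shows "(u * t + t - 1) div t = u" and "(u * t + t - 1) mod t = t - 1"
proof -
  have "u * t + t - 1 = t - 1 + u * t"
    using t by simp
  moreover have "(t - 1 + u * t) div t = u"
    using div_mult_self1[of t "t - 1" u] t by simp
  moreover have "(t - 1 + u * t) mod t = t - 1"
    using mod_mult_self1[of "t - 1" u t] t by simp
  ultimately show "(u * t + t - 1) div t = u" "(u * t + t - 1) mod t = t - 1"
    by simp_all
qed

lemma last_of_rows_eq_image:
  fixes t n K :: nat
  assumes t: "0 < t" and K: "n * t \<le> K"
  shows "{k\<in>{..<K}. k mod t = t - 1 \<and> k div t < n} = (\<lambda>u. u * t + t - 1) ` {..<n}"
proof
  show "{k\<in>{..<K}. k mod t = t - 1 \<and> k div t < n} \<subseteq> (\<lambda>u. u * t + t - 1) ` {..<n}"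
  proof
    fix k
    assume "k \<in> {k\<in>{..<K}. k mod t = t - 1 \<and> k div t < n}"
    then have k: "k mod t = t - 1" "k div t < n"
      by auto
    have "k = k div t * t + t - 1"
      using k(1) t div_mult_mod_eq[of k t] by linarith
    with k(2) show "k \<in> (\<lambda>u. u * t + t - 1) ` {..<n}"
      by blast
  qed
  show "(\<lambda>u. u * t + t - 1) ` {..<n} \<subseteq> {k\<in>{..<K}. k mod t = t - 1 \<and> k div t < n}"
  proof
    fix k
    assume "k \<in> (\<lambda>u. u * t + t - 1) ` {..<n}"
    then obtain u where u: "u < n" "k = u * t + t - 1"
      by blast
    then have "Suc u * t \<le> K"
      using K by (meson Suc_leI le_trans mult_le_mono1)
    then have "k < K"
      using t u(2) by simp
    with u show "k \<in> {k\<in>{..<K}. k mod t = t - 1 \<and> k div t < n}"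
      using last_of_row_div_mod[OF t, of u] by simp
  qed
qed

lemma sum_last_of_rows:
  fixes t n K :: nat
  assumes t: "0 < t" and K: "n * t \<le> K"
  shows "(\<Sum>k<K. if k mod t = t - 1 \<and> k div t < n then g k else 0) = (\<Sum>u<n. g (u * t + t - 1) :: 'a::comm_monoid_add)"
proof -
  have "inj (\<lambda>u. u * t + t - 1)"
    by (rule injI) (metis last_of_row_div_mod(1)[OF t])
  have "(\<Sum>k<K. if k mod t = t - 1 \<and> k div t < n then g k else 0)
      = (\<Sum>k\<in>{k\<in>{..<K}. k mod t = t - 1 \<and> k div t < n}. g k)"
    by (rule sum.inter_filter[symmetric]) simp
  also have "\<dots> = (\<Sum>u<n. g (u * t + t - 1))"
    unfolding last_of_rows_eq_image[OF t K] using \<open>inj (\<lambda>u. u * t + t - 1)\<close>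
    by (simp add: sum.reindex inj_on_subset)
  finally show ?thesis .
qed

lemma row_position_eq_iff:
  fixes a u g g' t :: nat
  assumes "g < t" and "g' < t"
  shows "a * t + g + (t - 1 - g') = u * t + t - 1 \<longleftrightarrow> a = u \<and> g = g'"
proof
  assume "a * t + g + (t - 1 - g') = u * t + t - 1"
  then have "a * t + g = u * t + g'"
    using assms by linarith
  then have "(a * t + g) div t = (u * t + g') div t" "(a * t + g) mod t = (u * t + g') mod t"
    by simp_all
  then show "a = u \<and> g = g'"
    using assms by simp
qed (use assms in simp)

lemma coeff_sum_monom_one:
  assumes "finite A"
  shows "coeff (\<Sum>w\<in>A. monom (1 :: nat) (h w)) k = card {w\<in>A. h w = k}"
  using assms by (simp add: coeff_sum sum.If_cases Int_def)

locale mis_protocol =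
  fixes n t s p L :: nat
  assumes t_pos: "0 < t" and s_pos: "0 < s" and n_eq: "t * s = n"
    and prime_p: "prime p" and p_large: "3 * (n * t + t) \<le> p" and p_bits: "p \<le> 2 ^ L"
begin

lemma row_less: "w < n \<Longrightarrow> w div s < t"
  using n_eq s_pos by (simp add: div_less_iff_less_mult mult.commute)

lemma column_bound: "x mod s < s" "\<not> s \<le> x mod s"
  using s_pos by (simp_all add: not_le)

(* nbr_poly has degree below K; the prover sends its K coefficients, L bits each *)
definition K :: nat where
  "K = n * t + t - 1"

definition edge_poly :: "(nat \<times> nat) list \<Rightarrow> nat \<Rightarrow> nat poly" where
  "edge_poly \<sigma> j = (\<Sum>x\<in>{x\<in>arcs \<sigma>. snd x mod s = j}. monom 1 (fst x * t + snd x div s))"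

definition set_poly :: "nat set \<Rightarrow> nat \<Rightarrow> nat poly" where
  "set_poly S j = (\<Sum>w\<in>{w\<in>S. w mod s = j}. monom 1 (t - 1 - w div s))"

definition nbr_poly :: "(nat \<times> nat) list \<Rightarrow> nat set \<Rightarrow> nat poly" where
  "nbr_poly \<sigma> S = (\<Sum>j<s. edge_poly \<sigma> j * set_poly S j)"

lemma coeff_nbr_poly:
  assumes \<sigma>: "valid_stream n \<sigma>" and S: "finite S"
  shows "coeff (nbr_poly \<sigma> S) k = (\<Sum>x\<in>arcs \<sigma>.
    card {w\<in>S. w mod s = snd x mod s \<and> fst x * t + snd x div s + (t - 1 - w div s) = k})"
proof -
  let ?hits = "\<lambda>x. card {w\<in>S. w mod s = snd x mod s \<and> fst x * t + snd x div s + (t - 1 - w div s) = k}"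
  have "coeff (edge_poly \<sigma> j * set_poly S j) k = (\<Sum>x\<in>{x\<in>arcs \<sigma>. snd x mod s = j}. ?hits x)" for j
  proof -
    have product: "edge_poly \<sigma> j * set_poly S j = (\<Sum>x\<in>{x\<in>arcs \<sigma>. snd x mod s = j}.
        \<Sum>w\<in>{w\<in>S. w mod s = j}. monom 1 (fst x * t + snd x div s + (t - 1 - w div s)))"
      by (simp add: edge_poly_def set_poly_def sum_product mult_monom)
    have "coeff (edge_poly \<sigma> j * set_poly S j) k = (\<Sum>x\<in>{x\<in>arcs \<sigma>. snd x mod s = j}.
        coeff (\<Sum>w\<in>{w\<in>S. w mod s = j}. monom 1 (fst x * t + snd x div s + (t - 1 - w div s))) k)"
      unfolding product by (rule coeff_sum)
    also have "\<dots> = (\<Sum>x\<in>{x\<in>arcs \<sigma>. snd x mod s = j}.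
        card {w\<in>{w\<in>S. w mod s = j}. fst x * t + snd x div s + (t - 1 - w div s) = k})"
      using S by (intro sum.cong refl coeff_sum_monom_one) simp
    also have "\<dots> = (\<Sum>x\<in>{x\<in>arcs \<sigma>. snd x mod s = j}. ?hits x)"
      by (intro sum.cong refl arg_cong[where f = card]) auto
    finally show ?thesis .
  qed
  then have "coeff (nbr_poly \<sigma> S) k = (\<Sum>j<s. \<Sum>x\<in>{x\<in>arcs \<sigma>. snd x mod s = j}. ?hits x)"
    by (simp add: nbr_poly_def coeff_sum)
  also have "\<dots> = (\<Sum>x\<in>arcs \<sigma>. ?hits x)"
    using finite_arcs[OF \<sigma>] s_pos by (intro sum.group) auto
  finally show ?thesis .
qed

lemma coeff_nbr_poly_diagonal:
  assumes \<sigma>: "valid_stream n \<sigma>" and S: "S \<subseteq> {..<n}" and u: "u < n"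
  shows "coeff (nbr_poly \<sigma> S) (u * t + t - 1) = card {w\<in>S. adj \<sigma> u w}"
proof -
  have hits: "{w\<in>S. w mod s = snd x mod s \<and> fst x * t + snd x div s + (t - 1 - w div s) = u * t + t - 1}
      = (if fst x = u \<and> snd x \<in> S then {snd x} else {})" if "x \<in> arcs \<sigma>" for x
  proof -
    have "snd x < n"
      using that arcs_subset[OF \<sigma>] by auto
    have "w mod s = snd x mod s \<and> fst x * t + snd x div s + (t - 1 - w div s) = u * t + t - 1
        \<longleftrightarrow> fst x = u \<and> w = snd x" if "w \<in> S" for w
    proof -
      have "w < n"
        using S that by auto
      have "fst x * t + snd x div s + (t - 1 - w div s) = u * t + t - 1
          \<longleftrightarrow> fst x = u \<and> snd x div s = w div s"
        by (rule row_position_eq_iff[OF row_less[OF \<open>snd x < n\<close>] row_less[OF \<open>w < n\<close>]])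
      moreover have "w mod s = snd x mod s \<and> snd x div s = w div s \<longleftrightarrow> w = snd x"
        by (metis div_mult_mod_eq)
      ultimately show ?thesis
        by auto
    qed
    then show ?thesis
      by auto
  qed
  have "coeff (nbr_poly \<sigma> S) (u * t + t - 1) = (\<Sum>x\<in>arcs \<sigma>. if fst x = u \<and> snd x \<in> S then 1 else 0)"
    unfolding coeff_nbr_poly[OF \<sigma> finite_subset[OF S finite_lessThan]]
    by (intro sum.cong refl) (simp only: hits card.empty card_1_singleton_iff if_distrib, simp)
  also have "\<dots> = card {x\<in>arcs \<sigma>. fst x = u \<and> snd x \<in> S}"
    using finite_arcs[OF \<sigma>] by (simp add: sum.If_cases Int_def)
  also have "{x\<in>arcs \<sigma>. fst x = u \<and> snd x \<in> S} = Pair u ` {w\<in>S. adj \<sigma> u w}"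
    by (auto simp: arcs_def)
  also have "card \<dots> = card {w\<in>S. adj \<sigma> u w}"
    by (rule card_image) (simp add: inj_on_def)
  finally show ?thesis .
qed

lemma coeff_nbr_poly_eq_0:
  assumes \<sigma>: "valid_stream n \<sigma>" and S: "S \<subseteq> {..<n}" and k: "K \<le> k"
  shows "coeff (nbr_poly \<sigma> S) k = 0"
proof -
  have below: "fst x * t + snd x div s + (t - 1 - w div s) < K" if "x \<in> arcs \<sigma>" for x w
  proof -
    have x: "fst x < n" "snd x < n"
      using that arcs_subset[OF \<sigma>] by auto
    then have "fst x * t + snd x div s < Suc (fst x) * t"
      using row_less by simp
    also have "\<dots> \<le> n * t"
      using x(1) by (intro mult_le_mono1) simp
    moreover have "t - 1 - w div s \<le> t - 1"
      by simp
    ultimately show ?thesis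
      using t_pos unfolding K_def by linarith
  qed
  show ?thesis
    unfolding coeff_nbr_poly[OF \<sigma> finite_subset[OF S finite_lessThan]]
  proof (intro sum.neutral ballI)
    fix x
    assume x: "x \<in> arcs \<sigma>"
    have "fst x * t + snd x div s + (t - 1 - w div s) \<noteq> k" for w
      using below[OF x, of w] k by linarith
    then show "card {w\<in>S. w mod s = snd x mod s \<and> fst x * t + snd x div s + (t - 1 - w div s) = k} = 0"
      by simp
  qed
qed

lemma degree_nbr_poly:
  assumes "valid_stream n \<sigma>" and "S \<subseteq> {..<n}"
  shows "degree (nbr_poly \<sigma> S) \<le> K - 1"
  using coeff_nbr_poly_eq_0[OF assms] by (intro degree_le) simp

lemma n_less_p: "n < p"
proof -
  have "n \<le> n * t"
    using t_pos by simp
  moreover have "3 * (n * t + t) = 3 * (n * t) + 3 * t"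
    by simp
  ultimately show ?thesis
    using p_large t_pos by linarith
qed

lemma K_less_p: "K < p"
proof -
  define m where "m = n * t"
  have "3 * (m + t) \<le> p"
    using p_large by (simp add: m_def)
  then show ?thesis
    using t_pos unfolding K_def m_def[symmetric] by arith
qed

lemma card_neighbours_less_p:
  assumes "S \<subseteq> {..<n}"
  shows "card {w\<in>S. adj \<sigma> u w} < p"
proof -
  have "card {w\<in>S. adj \<sigma> u w} \<le> card {..<n}"
    using assms by (intro card_mono) auto
  then show ?thesis
    using n_less_p by simp
qed

end

section \<open>The verifier\<close>

lemma mod_sum_mult_mod:
  "(\<Sum>j\<in>A. (a j mod p) * (b j mod p)) mod p = (\<Sum>j\<in>A. a j * b j) mod (p :: nat)"
proof -
  have "(\<Sum>j\<in>A. (a j mod p) * (b j mod p)) mod p = (\<Sum>j\<in>A. (a j mod p) * (b j mod p) mod p) mod p"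
    by (rule mod_sum_eq[symmetric])
  also have "\<dots> = (\<Sum>j\<in>A. a j * b j mod p) mod p"
    by (simp only: mod_mult_eq)
  also have "\<dots> = (\<Sum>j\<in>A. a j * b j) mod p"
    by (rule mod_sum_eq)
  finally show ?thesis .
qed

(* rnd is the random point r; fp accumulates the claimed polynomial at r, and psum j and
   qsum j accumulate edge_poly j and set_poly S j at r, all modulo p *)
record mis_state =
  rnd :: nat
  fp :: nat
  psum :: "nat \<Rightarrow> nat"
  qsum :: "nat \<Rightarrow> nat"

context mis_protocol
begin

lemma p_pos: "0 < p"
  using prime_p prime_gt_0_nat by blast

definition add_mod :: "nat \<Rightarrow> nat \<Rightarrow> (nat \<Rightarrow> nat) \<Rightarrow> nat \<Rightarrow> nat" where
  "add_mod j v f = f(j := (f j + v) mod p)"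

definition arc_term :: "nat \<Rightarrow> nat \<Rightarrow> nat \<times> nat \<Rightarrow> nat" where
  "arc_term r j x = (if snd x mod s = j then r ^ (fst x * t + snd x div s) else 0)"

definition edge_step :: "mis_state \<Rightarrow> nat \<times> nat \<Rightarrow> mis_state" where
  "edge_step x e = x\<lparr>psum := add_mod (snd e mod s) (rnd x ^ (fst e * t + snd e div s))
     (add_mod (fst e mod s) (rnd x ^ (snd e * t + fst e div s)) (psum x))\<rparr>"

definition start :: "nat \<Rightarrow> mis_state" where
  "start r = \<lparr>rnd = r, fp = 0, psum = (\<lambda>_. 0), qsum = (\<lambda>_. 0)\<rparr>"

lemma poly_edge_poly: "valid_stream n \<sigma> \<Longrightarrow> poly (edge_poly \<sigma> j) r = (\<Sum>x\<in>arcs \<sigma>. arc_term r j x)"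
  by (simp add: edge_poly_def arc_term_def poly_sum poly_monom sum.If_cases finite_arcs Int_def)

lemma edge_step_eq:
  assumes "\<forall>j. psum x j < p"
  shows "edge_step x e = x\<lparr>psum := \<lambda>j. (psum x j + arc_term (rnd x) j e + arc_term (rnd x) j (prod.swap e)) mod p\<rparr>"
proof -
  have "add_mod (snd e mod s) (rnd x ^ (fst e * t + snd e div s))
      (add_mod (fst e mod s) (rnd x ^ (snd e * t + fst e div s)) (psum x))
      = (\<lambda>j. (psum x j + arc_term (rnd x) j e + arc_term (rnd x) j (prod.swap e)) mod p)"
    using assms by (cases e) (auto simp: add_mod_def arc_term_def mod_add_left_eq mod_add_right_eq add_ac)
  then show ?thesis
    by (simp add: edge_step_def)
qed

lemma foldl_edge_step:
  assumes "\<forall>j. psum x j < p"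
  shows "foldl edge_step x \<sigma> = x\<lparr>psum := \<lambda>j.
    (psum x j + (\<Sum>e\<leftarrow>\<sigma>. arc_term (rnd x) j e + arc_term (rnd x) j (prod.swap e))) mod p\<rparr>"
  using assms
proof (induction \<sigma> arbitrary: x)
  case (Cons e \<sigma>)
  have "\<forall>j. psum (edge_step x e) j < p"
    using Cons.prems p_pos by (simp add: edge_step_eq)
  then show ?case
    using Cons by (simp add: edge_step_eq mod_add_left_eq add.assoc)
qed simp

lemma stream_phase:
  assumes "valid_stream n \<sigma>"
  shows "foldl edge_step (start r) \<sigma> = (start r)\<lparr>psum := \<lambda>j. poly (edge_poly \<sigma> j) r mod p\<rparr>"
  using foldl_edge_step[of "start r" \<sigma>] p_pos
  by (simp add: start_def poly_edge_poly[OF assms] sum_list_stream_both_directions[OF assms])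

(* coefficient u t + t - 1 is the claimed neighbour count of u; if it is 0 modulo p, then
   u belongs to the claimed set and its monomial is added to the value of set_poly *)
definition coeff_step :: "nat \<Rightarrow> nat \<Rightarrow> mis_state \<Rightarrow> mis_state" where
  "coeff_step k c x = x\<lparr>fp := (fp x + c * rnd x ^ k) mod p,
     qsum := (if k mod t = t - 1 \<and> k div t < n \<and> c mod p = 0
              then add_mod (k div t mod s) (rnd x ^ (t - 1 - k div t div s)) (qsum x)
              else qsum x)\<rparr>"

definition row_term :: "nat \<Rightarrow> nat \<Rightarrow> nat \<Rightarrow> nat \<Rightarrow> nat" where
  "row_term r c j k = (if k mod t = t - 1 \<and> k div t < n \<and> c mod p = 0 \<and> k div t mod s = j
     then r ^ (t - 1 - k div t div s) else 0)"

lemma coeff_step_eq: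
  assumes "\<forall>j. qsum x j < p"
  shows "coeff_step k c x = x\<lparr>fp := (fp x + c * rnd x ^ k) mod p,
    qsum := \<lambda>j. (qsum x j + row_term (rnd x) c j k) mod p\<rparr>"
proof -
  have "(if k mod t = t - 1 \<and> k div t < n \<and> c mod p = 0
        then add_mod (k div t mod s) (rnd x ^ (t - 1 - k div t div s)) (qsum x) else qsum x)
      = (\<lambda>j. (qsum x j + row_term (rnd x) c j k) mod p)"
    using assms by (auto simp: add_mod_def row_term_def)
  then show ?thesis
    by (simp add: coeff_step_def)
qed

lemma foldl_coeff_step:
  assumes "fp x < p" and "\<forall>j. qsum x j < p"
  shows "foldl (\<lambda>x k. coeff_step k (c k) x) x [0..<m] =
    x\<lparr>fp := (fp x + (\<Sum>k<m. c k * rnd x ^ k)) mod p,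
      qsum := \<lambda>j. (qsum x j + (\<Sum>k<m. row_term (rnd x) (c k) j k)) mod p\<rparr>"
proof (induction m)
  case 0
  show ?case
    using assms by simp
next
  case (Suc m)
  then show ?case
    using p_pos by (simp add: coeff_step_eq mod_add_left_eq add.assoc)
qed

definition claimed_set :: "bool list \<Rightarrow> nat set" where
  "claimed_set \<eta> = {u. u < n \<and> block L \<eta> (u * t + t - 1) mod p = 0}"

definition claimed_poly :: "bool list \<Rightarrow> nat poly" where
  "claimed_poly \<eta> = (\<Sum>k<K. monom (block L \<eta> k) k)"

definition mis_machine :: "(nat \<times> nat \<times> mis_state) machine" where
  "mis_machine =
    \<lparr>m_init = map_pmf (\<lambda>r. (0, 0, start r)) (pmf_of_set {..<p}),
     m_in = (\<lambda>(i, c, x) e. (i, c, edge_step x e)),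
     m_help = read_bit L K coeff_step,
     m_acc = (\<lambda>(i, c, x). i = K * L \<and> fp x = (\<Sum>j<s. psum x j * qsum x j) mod p),
     m_out = claimed_set\<rparr>"

lemma sum_row_term:
  "(\<Sum>k<K. row_term r (block L \<eta> k) j k) = poly (set_poly (claimed_set \<eta>) j) r"
proof -
  have "(\<Sum>k<K. row_term r (block L \<eta> k) j k)
      = (\<Sum>k<K. if k mod t = t - 1 \<and> k div t < n then
           (if block L \<eta> k mod p = 0 \<and> k div t mod s = j then r ^ (t - 1 - k div t div s) else 0) else 0)"
    by (intro sum.cong refl) (simp add: row_term_def)
  also have "\<dots> = (\<Sum>u<n. if block L \<eta> (u * t + t - 1) mod p = 0 \<and> u mod s = j then r ^ (t - 1 - u div s) else 0)"
    using sum_last_of_rows[OF t_pos, of n K "\<lambda>k. if block L \<eta> k mod p = 0 \<and> k div t mod s = j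
        then r ^ (t - 1 - k div t div s) else 0"] last_of_row_div_mod[OF t_pos] t_pos
    by (simp add: K_def cong: if_cong)
  also have "\<dots> = (\<Sum>w\<in>{w\<in>claimed_set \<eta>. w mod s = j}. r ^ (t - 1 - w div s))"
    by (simp add: sum.If_cases claimed_set_def Int_def)
  also have "\<dots> = poly (set_poly (claimed_set \<eta>) j) r"
    by (simp add: set_poly_def poly_sum poly_monom)
  finally show ?thesis .
qed

lemma L_pos: "0 < L"
  using p_bits prime_p prime_gt_1_nat[of p] by (cases L) auto

lemma foldl_m_in: "foldl (m_in mis_machine) (i, c, x) \<sigma> = (i, c, foldl edge_step x \<sigma>)"
  by (induction \<sigma> arbitrary: x) (simp_all add: mis_machine_def)

lemma m_help_mis_machine: "m_help mis_machine = read_bit L K coeff_step"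
  by (simp add: mis_machine_def)

lemma run_mis_machine:
  assumes \<sigma>: "valid_stream n \<sigma>" and \<eta>: "K * L \<le> length \<eta>"
  shows "machine_run mis_machine \<sigma> \<eta> (0, 0, start r) = (K * L, 0, (start r)\<lparr>
    fp := poly (claimed_poly \<eta>) r mod p,
    psum := \<lambda>j. poly (edge_poly \<sigma> j) r mod p,
    qsum := \<lambda>j. poly (set_poly (claimed_set \<eta>) j) r mod p\<rparr>)"
proof -
  define y where "y = (start r)\<lparr>psum := \<lambda>j. poly (edge_poly \<sigma> j) r mod p\<rparr>"
  have "machine_run mis_machine \<sigma> \<eta> (0, 0, start r) = foldl (read_bit L K coeff_step) (0, 0, y) \<eta>"
    by (simp add: machine_run_def foldl_m_in stream_phase[OF \<sigma>] m_help_mis_machine y_def)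
  also have "\<dots> = (K * L, 0, fold_blocks L coeff_step y \<eta> K)"
    by (rule read_bits_complete[OF L_pos \<eta>])
  also have "fold_blocks L coeff_step y \<eta> K = y\<lparr>
      fp := (\<Sum>k<K. block L \<eta> k * r ^ k) mod p,
      qsum := \<lambda>j. (\<Sum>k<K. row_term r (block L \<eta> k) j k) mod p\<rparr>"
    using foldl_coeff_step[of y] p_pos by (simp add: fold_blocks_def y_def start_def)
  finally show ?thesis
    by (simp add: y_def claimed_poly_def poly_sum poly_monom sum_row_term)
qed

lemma poly_nbr_poly: "poly (nbr_poly \<sigma> S) r = (\<Sum>j<s. poly (edge_poly \<sigma> j) r * poly (set_poly S j) r)"
  by (simp add: nbr_poly_def poly_sum)

lemma accepts_iff:
  assumes "valid_stream n \<sigma>" and "K * L \<le> length \<eta>"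
  shows "m_acc mis_machine (machine_run mis_machine \<sigma> \<eta> (0, 0, start r)) \<longleftrightarrow>
    poly (claimed_poly \<eta>) r mod p = poly (nbr_poly \<sigma> (claimed_set \<eta>)) r mod p"
  using run_mis_machine[OF assms]
  by (simp add: mis_machine_def start_def poly_nbr_poly mod_sum_mult_mod)

lemma rejects_short:
  assumes "length \<eta> < K * L"
  shows "\<not> m_acc mis_machine (machine_run mis_machine \<sigma> \<eta> (0, 0, start r))"
proof -
  have "fst (machine_run mis_machine \<sigma> \<eta> (0, 0, start r)) = length \<eta>"
    using read_bits_incomplete[OF L_pos assms]
    by (simp add: machine_run_def foldl_m_in m_help_mis_machine)
  with assms show ?thesis
    by (auto simp: mis_machine_def split: prod.splits)
qed

lemma machine_accept_prob_mis:
  "machine_accept_prob mis_machine \<sigma> \<eta> =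
    card {r\<in>{..<p}. m_acc mis_machine (machine_run mis_machine \<sigma> \<eta> (0, 0, start r))} / p"
proof -
  let ?A = "{r. m_acc mis_machine (machine_run mis_machine \<sigma> \<eta> (0, 0, start r))}"
  have "m_init mis_machine = map_pmf (\<lambda>r. (0, 0, start r)) (pmf_of_set {..<p})"
    by (simp add: mis_machine_def)
  then have "machine_accept_prob mis_machine \<sigma> \<eta> = measure_pmf.prob (pmf_of_set {..<p}) ?A"
    by (simp add: machine_accept_prob_def vimage_def)
  also have "\<dots> = card ({..<p} \<inter> ?A) / card {..<p}"
    using p_pos by (intro measure_pmf_of_set) auto
  finally show ?thesis
    by (simp add: Int_def)
qed

lemma coeff_claimed_poly: "coeff (claimed_poly \<eta>) k = (if k < K then block L \<eta> k else 0)"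
  by (simp add: claimed_poly_def coeff_sum)

lemma degree_claimed_poly: "degree (claimed_poly \<eta>) \<le> K - 1"
  by (rule degree_le) (auto simp: coeff_claimed_poly)

lemma last_of_row_less_K: "u < n \<Longrightarrow> u * t + t - 1 < K"
  using t_pos mult_less_mono1[of u n t] unfolding K_def by linarith

lemma claimed_set_subset: "claimed_set \<eta> \<subseteq> {..<n}"
  by (auto simp: claimed_set_def)

(* with correct coefficients, the claimed count of u is its true number of neighbours in the
   claimed set, and u is claimed iff that count is 0 *)
lemma is_MIS_if_coeff_mod_eq:
  assumes \<sigma>: "valid_stream n \<sigma>"
    and eq: "\<forall>k. coeff (claimed_poly \<eta>) k mod p = coeff (nbr_poly \<sigma> (claimed_set \<eta>)) k mod p"
  shows "is_MIS n \<sigma> (claimed_set \<eta>)"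
proof -
  let ?S = "claimed_set \<eta>"
  have "u \<in> ?S \<longleftrightarrow> \<not> (\<exists>w\<in>?S. adj \<sigma> u w)" if u: "u < n" for u
  proof -
    have "block L \<eta> (u * t + t - 1) mod p = coeff (nbr_poly \<sigma> ?S) (u * t + t - 1) mod p"
      using eq last_of_row_less_K[OF u] by (metis coeff_claimed_poly)
    also have "\<dots> = card {w\<in>?S. adj \<sigma> u w}"
      using coeff_nbr_poly_diagonal[OF \<sigma> claimed_set_subset u] card_neighbours_less_p[OF claimed_set_subset]
      by simp
    finally have "u \<in> ?S \<longleftrightarrow> card {w\<in>?S. adj \<sigma> u w} = 0"
      using u by (simp add: claimed_set_def)
    also have "\<dots> \<longleftrightarrow> \<not> (\<exists>w\<in>?S. adj \<sigma> u w)"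
      using finite_subset[OF claimed_set_subset] by auto
    finally show ?thesis .
  qed
  then show ?thesis
    unfolding is_MIS_iff using claimed_set_subset by blast
qed

lemma soundness:
  assumes \<sigma>: "valid_stream n \<sigma>" and not_MIS: "\<not> is_MIS n \<sigma> (claimed_set \<eta>)"
  shows "machine_accept_prob mis_machine \<sigma> \<eta> \<le> 1 / 3"
proof -
  let ?acc = "{r\<in>{..<p}. m_acc mis_machine (machine_run mis_machine \<sigma> \<eta> (0, 0, start r))}"
  have "card ?acc \<le> K - 1"
  proof (cases "K * L \<le> length \<eta>")
    case True
    let ?C = "claimed_poly \<eta>" and ?R = "nbr_poly \<sigma> (claimed_set \<eta>)"
    have "card ?acc = card {r\<in>{..<p}. poly ?C r mod p = poly ?R r mod p}"
      using accepts_iff[OF \<sigma> True] by simp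
    also have "\<dots> \<le> max (degree ?C) (degree ?R)"
      using is_MIS_if_coeff_mod_eq[OF \<sigma>] not_MIS prime_p by (intro card_poly_mod_eq_le_degree) auto
    also have "\<dots> \<le> K - 1"
      using degree_claimed_poly degree_nbr_poly[OF \<sigma> claimed_set_subset] by simp
    finally show ?thesis .
  next
    case False
    then show ?thesis
      using rejects_short by simp
  qed
  moreover have "3 * (K - 1) \<le> p"
    using p_large by (simp add: K_def)
  ultimately have "3 * card ?acc \<le> p"
    by linarith
  then show ?thesis
    using p_pos by (simp add: machine_accept_prob_mis field_simps)
qed

definition honest_help :: "(nat \<times> nat) list \<Rightarrow> nat set \<Rightarrow> bool list" where
  "honest_help \<sigma> S = concat (map (\<lambda>k. rev (map (bit (coeff (nbr_poly \<sigma> S) k mod p)) [0..<L])) [0..<K])"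

lemma length_honest_help: "length (honest_help \<sigma> S) = K * L"
  unfolding honest_help_def by (rule length_concat_blocks) simp

lemma block_honest_help:
  assumes "k < K"
  shows "block L (honest_help \<sigma> S) k = coeff (nbr_poly \<sigma> S) k mod p"
proof -
  have "coeff (nbr_poly \<sigma> S) k mod p < 2 ^ L"
    using p_pos p_bits by (meson mod_less_divisor order_less_le_trans)
  then show ?thesis
    unfolding honest_help_def using assms by (simp add: block_concat bits_value_binary)
qed

lemma completeness:
  assumes \<sigma>: "valid_stream n \<sigma>" and S: "is_MIS n \<sigma> S"
  shows "claimed_set (honest_help \<sigma> S) = S" and "machine_accept_prob mis_machine \<sigma> (honest_help \<sigma> S) = 1"
proof -
  let ?\<eta> = "honest_help \<sigma> S"
  have S_sub: "S \<subseteq> {..<n}"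
    using S by (simp add: is_MIS_def)
  have "u \<in> claimed_set ?\<eta> \<longleftrightarrow> u < n \<and> \<not> (\<exists>w\<in>S. adj \<sigma> u w)" for u
  proof (cases "u < n")
    case True
    then have "block L ?\<eta> (u * t + t - 1) mod p = card {w\<in>S. adj \<sigma> u w}"
      using block_honest_help last_of_row_less_K coeff_nbr_poly_diagonal[OF \<sigma> S_sub]
        card_neighbours_less_p[OF S_sub] by simp
    then show ?thesis
      using True finite_subset[OF S_sub] by (auto simp: claimed_set_def)
  qed (simp add: claimed_set_def)
  then show claimed: "claimed_set ?\<eta> = S"
    using S unfolding is_MIS_iff by blast
  have "coeff (claimed_poly ?\<eta>) k mod p = coeff (nbr_poly \<sigma> (claimed_set ?\<eta>)) k mod p" for k
    using coeff_nbr_poly_eq_0[OF \<sigma> S_sub, of k]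
    by (simp add: claimed coeff_claimed_poly block_honest_help)
  then have "m_acc mis_machine (machine_run mis_machine \<sigma> ?\<eta> (0, 0, start r))" for r
    using accepts_iff[OF \<sigma>] length_honest_help poly_mod_eq_if_coeff_mod_eq by simp
  then show "machine_accept_prob mis_machine \<sigma> ?\<eta> = 1"
    using p_pos by (simp add: machine_accept_prob_mis)
qed

end

section \<open>Encoding the verifier's states as numbers\<close>

lemma horner_sum_less_power:
  fixes B :: nat
  assumes "\<forall>d\<in>set ds. d < B"
  shows "horner_sum (\<lambda>d. d) B ds < B ^ length ds"
  using assms
proof (induction ds)
  case (Cons d ds)
  then have "d + B * horner_sum (\<lambda>d. d) B ds < B + B * horner_sum (\<lambda>d. d) B ds"
    by simp
  also have "\<dots> \<le> B * B ^ length ds"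
    using Cons by (metis Suc_leI list.set_intros(2) mult_Suc_right mult_le_mono2)
  finally show ?case
    by simp
qed simp

definition digits :: "nat \<Rightarrow> nat \<Rightarrow> nat \<Rightarrow> nat list" where
  "digits B m c = map (\<lambda>i. c div B ^ i mod B) [0..<m]"

lemma digits_horner_sum:
  fixes B :: nat
  assumes "\<forall>d\<in>set ds. d < B"
  shows "digits B (length ds) (horner_sum (\<lambda>d. d) B ds) = ds"
  using assms
proof (induction ds)
  case (Cons d ds)
  then have B: "B > 0"
    by auto
  have "digits B (length (d # ds)) (horner_sum (\<lambda>d. d) B (d # ds))
      = (d + B * horner_sum (\<lambda>d. d) B ds) mod B # digits B (length ds) ((d + B * horner_sum (\<lambda>d. d) B ds) div B)"
    by (simp add: digits_def map_upt_Suc div_mult2_eq del: upt_Suc)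
  also have "\<dots> = d # digits B (length ds) (horner_sum (\<lambda>d. d) B ds)"
    using Cons B by simp
  finally show ?case
    using Cons by simp
qed (simp add: digits_def)

context mis_protocol
begin

definition state_digits :: "nat \<times> nat \<times> mis_state \<Rightarrow> nat list" where
  "state_digits = (\<lambda>(i, c, x). [i, c, rnd x, fp x] @ map (psum x) [0..<s] @ map (qsum x) [0..<s])"

definition encode_state :: "nat \<times> nat \<times> mis_state \<Rightarrow> nat" where
  "encode_state st = horner_sum (\<lambda>d. d) (4 ^ L) (state_digits st)"

definition decode_state :: "nat \<Rightarrow> nat \<times> nat \<times> mis_state" where
  "decode_state r = (let ds = digits (4 ^ L) (4 + 2 * s) r in
     (ds ! 0, ds ! 1, \<lparr>rnd = ds ! 2, fp = ds ! 3,
       psum = \<lambda>j. if j < s then ds ! (4 + j) else 0,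
       qsum = \<lambda>j. if j < s then ds ! (4 + s + j) else 0\<rparr>))"

definition good_state :: "nat \<times> nat \<times> mis_state \<Rightarrow> bool" where
  "good_state = (\<lambda>(i, c, x). i \<le> K * L \<and> c < 2 ^ L \<and> rnd x < p \<and> fp x < p \<and>
     (\<forall>j. psum x j < p \<and> qsum x j < p) \<and> (\<forall>j\<ge>s. psum x j = 0 \<and> qsum x j = 0))"

lemma KL_less: "K * L < 4 ^ L"
proof -
  have "K < 2 ^ L"
    using K_less_p p_bits by linarith
  then have "K * L < 2 ^ L * 2 ^ L"
    using less_exp[of L] by (intro mult_strict_mono) auto
  also have "\<dots> = 4 ^ L"
    by (subst power_mult_distrib[symmetric]) simp
  finally show ?thesis .
qed

lemma good_state_digits_less:
  assumes "good_state st"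
  shows "\<forall>d\<in>set (state_digits st). d < 4 ^ L"
proof -
  have "(2 :: nat) ^ L \<le> 4 ^ L"
    by (rule power_mono) simp_all
  moreover have "p \<le> 4 ^ L"
    using p_bits calculation by linarith
  ultimately show ?thesis
    using assms KL_less
    by (auto simp: good_state_def state_digits_def intro: less_le_trans split: prod.splits)
qed

lemma length_state_digits: "length (state_digits st) = 4 + 2 * s"
  by (cases st) (simp add: state_digits_def)

lemma encode_state_less:
  assumes "good_state st"
  shows "encode_state st < 2 ^ (2 * L * (4 + 2 * s))"
proof -
  have "encode_state st < (4 ^ L) ^ length (state_digits st)"
    unfolding encode_state_def by (rule horner_sum_less_power[OF good_state_digits_less[OF assms]])
  also have "\<dots> = 2 ^ (2 * L * (4 + 2 * s))"
    by (simp add: length_state_digits power_mult)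
  finally show ?thesis .
qed

lemma decode_encode_state:
  assumes "good_state st"
  shows "decode_state (encode_state st) = st"
proof -
  obtain i c x where st: "st = (i, c, x)"
    by (cases st) auto
  have "digits (4 ^ L) (4 + 2 * s) (encode_state st) = state_digits st"
    unfolding encode_state_def length_state_digits[of st, symmetric]
    by (rule digits_horner_sum[OF good_state_digits_less[OF assms]])
  moreover have "(\<lambda>j. if j < s then psum x j else 0) = psum x" "(\<lambda>j. if j < s then qsum x j else 0) = qsum x"
    using assms by (auto simp: good_state_def st)
  ultimately show ?thesis
    by (simp add: decode_state_def state_digits_def st nth_append Let_def eval_nat_numeral cong: if_cong)
qed

lemma good_state_init:
  assumes "st \<in> set_pmf (m_init mis_machine)"
  shows "good_state st"
proof -
  have "set_pmf (m_init mis_machine) = (\<lambda>r. (0, 0, start r)) ` {..<p}"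
    using p_pos by (simp add: mis_machine_def lessThan_empty_iff)
  with assms obtain r where "r < p" "st = (0, 0, start r)"
    by auto
  then show ?thesis
    using p_pos by (simp add: good_state_def start_def)
qed

lemma good_state_in: "good_state st \<Longrightarrow> good_state (m_in mis_machine st e)"
  using p_pos by (auto simp: mis_machine_def good_state_def edge_step_def add_mod_def column_bound
      split: prod.splits)

lemma good_state_help: "good_state st \<Longrightarrow> good_state (m_help mis_machine st b)"
  using p_pos by (auto simp: m_help_mis_machine read_bit_def good_state_def coeff_step_def
      add_mod_def column_bound split: prod.splits)

sublocale coding: machine_coding "2 * L * (4 + 2 * s)" encode_state decode_state good_state mis_machine
  by unfold_locales
    (simp_all add: encode_state_less decode_encode_state good_state_init good_state_in good_state_help)

lemma m_out_mis_machine: "m_out mis_machine = claimed_set"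
  by (simp add: mis_machine_def)

lemma is_MIS_scheme_mis_machine: "is_MIS_scheme n (K * L) (2 * L * (4 + 2 * s))
    (encode_machine (2 * L * (4 + 2 * s)) encode_state decode_state mis_machine)"
proof (rule coding.is_MIS_scheme_encode_machine)
  fix \<sigma>
  assume \<sigma>: "valid_stream n \<sigma>"
  then obtain S where S: "is_MIS n \<sigma> S"
    using exists_MIS by blast
  show "\<exists>\<eta>. length \<eta> \<le> K * L \<and> is_MIS n \<sigma> (m_out mis_machine \<eta>) \<and>
      machine_accept_prob mis_machine \<sigma> \<eta> = 1"
    using completeness[OF \<sigma> S] length_honest_help S
    by (intro exI[of _ "honest_help \<sigma> S"]) (simp add: m_out_mis_machine)
next
  fix \<sigma> \<eta>
  assume "valid_stream n \<sigma>" and "\<not> is_MIS n \<sigma> (m_out mis_machine \<eta>)"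
  then show "machine_accept_prob mis_machine \<sigma> \<eta> \<le> 1 / 3"
    using soundness by (simp add: m_out_mis_machine)
qed

end

section \<open>Choice of the parameters\<close>

lemma log_ceiling_bounds:
  fixes n :: nat
  defines "l \<equiv> nat \<lceil>log 2 (real n + 2)\<rceil>"
  shows "1 \<le> log 2 (real n + 2)" and "n + 2 \<le> 2 ^ l" and "real l \<le> 2 * log 2 (real n + 2)"
proof -
  show lg: "1 \<le> log 2 (real n + 2)"
    by simp
  have "real (n + 2) = 2 powr log 2 (real n + 2)"
    by simp
  also have "\<dots> \<le> 2 powr real l"
    unfolding l_def using lg by (intro powr_mono) auto
  also have "\<dots> = real (2 ^ l)"
    by (simp add: powr_realpow)
  finally show "n + 2 \<le> 2 ^ l"
    by (simp only: of_nat_le_iff)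
  show "real l \<le> 2 * log 2 (real n + 2)"
    unfolding l_def using lg by linarith
qed

lemma prime_bound_power:
  fixes n N p :: nat
  assumes N: "N \<le> 3 * (n + 2) ^ 2" and p: "p \<le> 2 * N ^ 3" and n: "1 \<le> n"
  shows "p \<le> (n + 2) ^ 10"
proof -
  have "N ^ 3 \<le> (3 * (n + 2) ^ 2) ^ 3"
    using N by (rule power_mono) simp
  also have "\<dots> = 27 * (n + 2) ^ 6"
    by (simp add: power_mult_distrib flip: power_mult)
  finally have "p \<le> 54 * (n + 2) ^ 6"
    using p by linarith
  also have "\<dots> \<le> (n + 2) ^ 4 * (n + 2) ^ 6"
  proof -
    have "(3 :: nat) ^ 4 \<le> (n + 2) ^ 4"
      using n by (intro power_mono) auto
    then show ?thesis
      by (intro mult_right_mono) auto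
  qed
  also have "\<dots> = (n + 2) ^ 10"
    by (simp flip: power_add)
  finally show ?thesis .
qed

lemma exists_mis_protocol:
  fixes n t s :: nat
  assumes t: "0 < t" and s: "0 < s" and ts: "t * s = n"
  shows "\<exists>p L. mis_protocol n t s p L \<and> real L \<le> 20 * log 2 (real n + 2)"
proof -
  define l where "l = nat \<lceil>log 2 (real n + 2)\<rceil>"
  define N where "N = max 4 (3 * (n * t + t))"
  obtain p where p: "prime p" "N < p" "p \<le> 2 * N ^ 3"
    using exists_prime_between_cube[of N] by (auto simp: N_def)
  have "t * 1 \<le> t * s"
    using s by (intro mult_le_mono2) simp
  then have "t \<le> n"
    using ts by simp
  have "n * t \<le> n * n"
    using \<open>t \<le> n\<close> by (rule mult_le_mono2)
  moreover have "(n + 2) ^ 2 = n * n + 4 * n + 4"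
    by (simp add: power2_eq_square algebra_simps)
  ultimately have "n * t + t \<le> (n + 2) ^ 2"
    using \<open>t \<le> n\<close> by linarith
  moreover have "4 \<le> 3 * (n + 2) ^ 2"
    using power_mono[of 2 "n + 2" 2] by simp
  ultimately have "N \<le> 3 * (n + 2) ^ 2"
    by (simp add: N_def)
  moreover have "1 \<le> n"
    using \<open>t \<le> n\<close> t by simp
  ultimately have "p \<le> (n + 2) ^ 10"
    using prime_bound_power p(3) by blast
  also have "\<dots> \<le> (2 ^ l) ^ 10"
    using log_ceiling_bounds(2)[of n] by (intro power_mono) (simp_all add: l_def)
  also have "\<dots> = 2 ^ (10 * l)"
    by (simp flip: power_mult add: mult.commute)
  finally have "mis_protocol n t s p (10 * l)"
    using t s ts p by unfold_locales (simp_all add: N_def)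
  moreover have "real (10 * l) \<le> 20 * log 2 (real n + 2)"
    using log_ceiling_bounds(3)[of n] by (simp add: l_def)
  ultimately show ?thesis
    by blast
qed

lemma (in mis_protocol) mis_scheme_size:
  assumes "real L \<le> 20 * log 2 (real n + 2)"
  shows "real (K * L) \<le> 240 * real (n * t) * log 2 (real n + 2)"
    and "real (2 * L * (4 + 2 * s)) \<le> 240 * real s * log 2 (real n + 2)"
proof -
  have "1 \<le> n"
    using t_pos s_pos n_eq by (metis One_nat_def Suc_leI nat_0_less_mult_iff)
  then have "t \<le> n * t"
    by simp
  then have "K \<le> 2 * (n * t)"
    unfolding K_def by arith
  then have "real K \<le> real (2 * (n * t))"
    by (rule of_nat_mono)
  then have "real (K * L) \<le> real (2 * (n * t)) * (20 * log 2 (real n + 2))"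
    using assms by (simp only: of_nat_mult) (intro mult_mono; simp)
  also have "\<dots> \<le> 240 * real (n * t) * log 2 (real n + 2)"
    by simp
  finally show "real (K * L) \<le> 240 * real (n * t) * log 2 (real n + 2)" .
  have "real (2 * L * (4 + 2 * s)) \<le> 2 * (20 * log 2 (real n + 2)) * (6 * real s)"
    using assms s_pos by (simp only: of_nat_mult of_nat_add of_nat_numeral) (intro mult_mono; simp)
  then show "real (2 * L * (4 + 2 * s)) \<le> 240 * real s * log 2 (real n + 2)"
    by simp
qed

theorem theorem4p7:
  shows "\<exists>(C::real) (c::nat). C > 0 \<and>
    (\<forall>n t s :: nat. t > 0 \<longrightarrow> s > 0 \<longrightarrow> t * s = n \<longrightarrow>
       (\<exists>h v V. is_MIS_scheme n h v V \<and>
          real h \<le> C * real (n * t) * (log 2 (real n + 2)) ^ c \<and>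
          real v \<le> C * real s * (log 2 (real n + 2)) ^ c))"
proof -
  have "\<forall>n t s :: nat. t > 0 \<longrightarrow> s > 0 \<longrightarrow> t * s = n \<longrightarrow>
       (\<exists>h v V. is_MIS_scheme n h v V \<and>
          real h \<le> 240 * real (n * t) * (log 2 (real n + 2)) ^ 1 \<and>
          real v \<le> 240 * real s * (log 2 (real n + 2)) ^ 1)"
  proof (intro allI impI)
    fix n t s :: nat
    assume "t > 0" "s > 0" "t * s = n"
    then obtain p L where protocol: "mis_protocol n t s p L" and L: "real L \<le> 20 * log 2 (real n + 2)"
      using exists_mis_protocol by blast
    interpret mis_protocol n t s p L
      by (rule protocol)
    show "\<exists>h v V. is_MIS_scheme n h v V \<and>
        real h \<le> 240 * real (n * t) * (log 2 (real n + 2)) ^ 1 \<and>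
        real v \<le> 240 * real s * (log 2 (real n + 2)) ^ 1"
      using is_MIS_scheme_mis_machine mis_scheme_size[OF L] unfolding power_one_right by blast
  qed
  then show ?thesis
    by (intro exI[of _ "240 :: real"] exI[of _ "1 :: nat"] conjI) simp_all
qed

end
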